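(* In the road network model, suppose the arrival vectors $\{A(t)\}_{t\ge1}$ are independent and identically distributed with expectation $a$. If $a\notin\bar{\mathcal A}$, then every policy (every choice of service proportions $P^j_\sigma(t)\ge0$ with $\sum_{\sigma\in\mathcal S_j}P^j_\sigma(t)\le 1-L_0/T$ for all $j,t$) is unstable, i.e. $$\lim_{\tau\to\infty}\mathbb E\Big[\frac1\tau\sum_{t=1}^\tau Q^\Sigma(t)\Big]=\infty.$$
   Context: Road network model. $\mathcal J$ is a finite set of junctions; each junction $j$ has a finite set of in-roads $\mathcal I_j$, pairwise disjoint, $\mathcal I=\bigcup_j\mathcal I_j$; $j(i)$ is the junction containing in-road $i$. Each junction $j$ has a finite set $\mathcal S_j$ of phases $\sigma=(\sigma_i)_{i\in j}$, $\sigma_i\ge0$. $\mathcal L\subseteq\mathcal I\times\mathcal I$ is the set of links. Common cycle length $T>0$ and lost time $L_0\in[0,T)$. Time slotted $t=0,1,\dots$. $Q(t)\in\mathbb Z_+^{\mathcal I}$ are queue lengths, $S_i(t)\le S_{\max}$ potential services with $\mathbb E[S_i(t)\mid Q(t)]=\sum_{\sigma\in\mathcal S_{j(i)}}\sigma_iP^{j(i)}_\sigma(t)$, $p_{ii'}(t)\in[0,1]$ stationary turning proportions with mean $\bar p_{ii'}$ independent of queues and services, $A_i(t)$ external arrivals. Dynamics: $Q_i(t+1)=Q_i(t)-S_i(t)\wedge Q_i(t)+A_i(t)+\sum_{i':i'i\in\mathcal L}[S_{i'}(t)\wedge Q_{i'}(t)]p_{i'i}(t)$. Stability region: $\mathcal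 A$ is the set of $a\ge0$ for which there exist positive $\rho=(\rho^j_\sigma)$ and positive $s=(s_i)$ with $a_i+\sum_{i':i'i\in\mathcal L}s_{i'}\bar p_{i'i}<s_i$ for all $i$, $\sum_{\sigma\in\mathcal S_j}\rho^j_\sigma\le 1-L_0/T$ for all $j$, and $s_i\le\sum_{\sigma\in\mathcal S_{j(i)}}\rho^{j(i)}_\sigma\sigma_i$ for all $i$. $\bar{\mathcal A}$ is its closure (the same conditions with non-strict inequalities). $Q^\Sigma(t)=\sum_iQ_i(t)$. *)

theory Defs
  imports "HOL-Probability.Probability"
begin

text \<open>Road network: junctions J, in-roads In j of junction j, phases Ph j,
links L, mean turning proportions pbar, cycle length T, lost time L0.\<close>

definition in_roads :: "'j set \<Rightarrow> ('j \<Rightarrow> 'r set) \<Rightarrow> 'r set" where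
  "in_roads J In = (\<Union>j\<in>J. In j)"

text \<open>Closure of the stability region: the defining conditions of the
stability region with all inequalities non-strict.\<close>

definition closed_stab_region ::
  "'j set \<Rightarrow> ('j \<Rightarrow> 'r set) \<Rightarrow> ('j \<Rightarrow> ('r \<Rightarrow> real) set) \<Rightarrow> ('r \<times> 'r) set
   \<Rightarrow> ('r \<Rightarrow> 'r \<Rightarrow> real) \<Rightarrow> real \<Rightarrow> real \<Rightarrow> ('r \<Rightarrow> real) set" where
  "closed_stab_region J In Ph L pbar T L0 =
    {a. (\<forall>i\<in>in_roads J In. a i \<ge> 0) \<and>
        (\<exists>(\<rho>::'j \<Rightarrow> ('r \<Rightarrow> real) \<Rightarrow> real) (s::'r \<Rightarrow> real).
           (\<forall>j\<in>J. \<forall>\<sigma>\<in>Ph j. \<rho> j \<sigma> \<ge> 0) \<and>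
           (\<forall>i\<in>in_roads J In. s i \<ge> 0) \<and>
           (\<forall>i\<in>in_roads J In. a i + (\<Sum>i'\<in>{i'. (i', i) \<in> L}. s i' * pbar i' i) \<le> s i) \<and>
           (\<forall>j\<in>J. (\<Sum>\<sigma>\<in>Ph j. \<rho> j \<sigma>) \<le> 1 - L0 / T) \<and>
           (\<forall>j\<in>J. \<forall>i\<in>In j. s i \<le> (\<Sum>\<sigma>\<in>Ph j. \<rho> j \<sigma> * \<sigma> i)))}"

definition gen_sigma :: "'w measure \<Rightarrow> 'r set \<Rightarrow> ('w \<Rightarrow> 'r \<Rightarrow> real) \<Rightarrow> 'w measure" where
  "gen_sigma M I X = vimage_algebra (space M) (\<lambda>\<omega>. restrict (X \<omega>) I) (PiM I (\<lambda>_. borel))"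

end

theory Submission
  imports Defs
begin

text \<open>
  Fix any policy and suppose the expected time-averaged total queue does not tend to infinity,
  so that it stays below some bound B along infinitely many horizons \<open>\<tau>\<close>.  Telescoping the
  queue dynamics, the queue at time t dominates the sum of the one-step increments
  \<open>A + \<Sum> departures * p - departures\<close> over the earlier slots.  Taking expectations (arrivals are
  identically distributed, turning proportions are independent of queues and services, and the
  expected service is the phase-weighted capacity), the expected increment at slot u is the
  drift \<open>a + \<Sum> s\<^sub>u * pbar - s\<^sub>u\<close> of the mean departure vector \<open>s\<^sub>u\<close>, and \<open>s\<^sub>u\<close> together with the
  mean phase proportions \<open>\<rho>\<^sub>u\<close> satisfies the capacity constraints of the stability region.
  Averaging \<open>(\<rho>\<^sub>u, s\<^sub>u)\<close> over all pairs \<open>1 \<le> u < t \<le> \<tau>\<close> keeps the (convex) constraints and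
  yields a drift of at most \<open>2B/(\<tau> - 1)\<close>.  So for every \<open>\<epsilon> > 0\<close> the arrival rate a is
  \<open>\<epsilon>\<close>-feasible, and a compactness argument puts a into the closed region.
\<close>

definition phase_feasible ::
  "'j set \<Rightarrow> ('j \<Rightarrow> 'r set) \<Rightarrow> ('j \<Rightarrow> ('r \<Rightarrow> real) set) \<Rightarrow> real
   \<Rightarrow> ('j \<Rightarrow> ('r \<Rightarrow> real) \<Rightarrow> real) \<Rightarrow> ('r \<Rightarrow> real) \<Rightarrow> bool" where
  "phase_feasible J In Ph c \<rho> s \<longleftrightarrow>
     (\<forall>j\<in>J. \<forall>\<sigma>\<in>Ph j. \<rho> j \<sigma> \<ge> 0) \<and>
     (\<forall>i\<in>in_roads J In. s i \<ge> 0) \<and>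
     (\<forall>j\<in>J. (\<Sum>\<sigma>\<in>Ph j. \<rho> j \<sigma>) \<le> c) \<and>
     (\<forall>j\<in>J. \<forall>i\<in>In j. s i \<le> (\<Sum>\<sigma>\<in>Ph j. \<rho> j \<sigma> * \<sigma> i))"

definition drift ::
  "('r \<times> 'r) set \<Rightarrow> ('r \<Rightarrow> 'r \<Rightarrow> real) \<Rightarrow> ('r \<Rightarrow> real) \<Rightarrow> ('r \<Rightarrow> real) \<Rightarrow> 'r \<Rightarrow> real" where
  "drift L pbar a s i = a i + (\<Sum>i'\<in>{i'. (i', i) \<in> L}. s i' * pbar i' i) - s i"

lemma closed_stab_region_iff:
  "a \<in> closed_stab_region J In Ph L pbar T L0 \<longleftrightarrow>
     (\<forall>i\<in>in_roads J In. a i \<ge> 0) \<and>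
     (\<exists>\<rho> s. phase_feasible J In Ph (1 - L0 / T) \<rho> s \<and> (\<forall>i\<in>in_roads J In. drift L pbar a s i \<le> 0))"
  unfolding closed_stab_region_def phase_feasible_def drift_def by auto

lemma bounded_family_convergent_subseq:
  fixes f :: "nat \<Rightarrow> 'k \<Rightarrow> real"
  assumes "finite K" "\<And>n k. k \<in> K \<Longrightarrow> \<bar>f n k\<bar> \<le> B"
  shows "\<exists>r g. strict_mono r \<and> (\<forall>k\<in>K. (\<lambda>n. f (r n) k) \<longlonglongrightarrow> g k)"
  using assms
proof (induction K rule: finite_induct)
  case empty
  then show ?case by (auto intro: strict_mono_id)
next
  case (insert x F)
  then obtain r g where r: "strict_mono r" and g: "\<forall>k\<in>F. (\<lambda>n. f (r n) k) \<longlonglongrightarrow> g k"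
    by auto
  have "bounded (range (\<lambda>n. f (r n) x))"
    using insert.prems by (auto simp: bounded_iff)
  then obtain l r' where r': "strict_mono r'" and l: "((\<lambda>n. f (r n) x) \<circ> r') \<longlonglongrightarrow> l"
    using bounded_imp_convergent_subsequence by blast
  have "(\<lambda>n. f (r (r' n)) k) \<longlonglongrightarrow> (g(x := l)) k" if "k \<in> insert x F" for k
  proof (cases "k = x")
    case True
    then show ?thesis using l by (simp add: comp_def)
  next
    case False
    then show ?thesis
      using that g LIMSEQ_subseq_LIMSEQ[OF _ r', of "\<lambda>n. f (r n) k"] by (auto simp: comp_def)
  qed
  moreover have "strict_mono (r \<circ> r')" using r r' by (simp add: strict_mono_o)
  ultimately show ?case by (intro exI[of _ "r \<circ> r'"] exI[of _ "g(x := l)"]) (auto simp: comp_def)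
qed

(* Feasible phase proportions are bounded, which makes the compactness argument work. *)
lemma phase_feasible_share_le:
  assumes "phase_feasible J In Ph c \<rho> s" "j \<in> J" "\<sigma> \<in> Ph j" "finite (Ph j)"
  shows "0 \<le> \<rho> j \<sigma> \<and> \<rho> j \<sigma> \<le> c"
proof -
  have "\<rho> j \<sigma> \<le> (\<Sum>\<sigma>'\<in>Ph j. \<rho> j \<sigma>')"
    using assms by (intro member_le_sum) (auto simp: phase_feasible_def)
  then show ?thesis using assms by (auto simp: phase_feasible_def)
qed

lemma phase_feasible_limit:
  assumes feas: "\<And>n. phase_feasible J In Ph c (\<rho> n) (s n)"
    and finPh: "\<And>j. j \<in> J \<Longrightarrow> finite (Ph j)"
    and lim_\<rho>: "\<And>j \<sigma>. j \<in> J \<Longrightarrow> \<sigma> \<in> Ph j \<Longrightarrow> (\<lambda>n. \<rho> n j \<sigma>) \<longlonglongrightarrow> \<rho>' j \<sigma>"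
    and lim_s: "\<And>i. i \<in> in_roads J In \<Longrightarrow> (\<lambda>n. s n i) \<longlonglongrightarrow> s' i"
  shows "phase_feasible J In Ph c \<rho>' s'"
  unfolding phase_feasible_def
proof (intro conjI ballI)
  fix j \<sigma> assume "j \<in> J" "\<sigma> \<in> Ph j"
  then show "0 \<le> \<rho>' j \<sigma>"
    using feas by (intro LIMSEQ_le_const[OF lim_\<rho>]) (auto simp: phase_feasible_def)
next
  fix i assume "i \<in> in_roads J In"
  then show "0 \<le> s' i"
    using feas by (intro LIMSEQ_le_const[OF lim_s]) (auto simp: phase_feasible_def)
next
  fix j assume j: "j \<in> J"
  have "(\<lambda>n. \<Sum>\<sigma>\<in>Ph j. \<rho> n j \<sigma>) \<longlonglongrightarrow> (\<Sum>\<sigma>\<in>Ph j. \<rho>' j \<sigma>)"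
    using j by (intro tendsto_sum lim_\<rho>)
  then show "(\<Sum>\<sigma>\<in>Ph j. \<rho>' j \<sigma>) \<le> c"
    using feas j by (intro LIMSEQ_le_const2) (auto simp: phase_feasible_def)
next
  fix j i assume j: "j \<in> J" and i: "i \<in> In j"
  then have "i \<in> in_roads J In" by (auto simp: in_roads_def)
  moreover have "(\<lambda>n. \<Sum>\<sigma>\<in>Ph j. \<rho> n j \<sigma> * \<sigma> i) \<longlonglongrightarrow> (\<Sum>\<sigma>\<in>Ph j. \<rho>' j \<sigma> * \<sigma> i)"
    using j by (intro tendsto_sum tendsto_mult lim_\<rho> tendsto_const)
  ultimately show "s' i \<le> (\<Sum>\<sigma>\<in>Ph j. \<rho>' j \<sigma> * \<sigma> i)"
    using feas j i by (intro LIMSEQ_le[OF lim_s]) (auto simp: phase_feasible_def)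
qed

lemma drift_limit:
  assumes "\<And>i'. (i', i) \<in> L \<Longrightarrow> (\<lambda>n. s n i') \<longlonglongrightarrow> s' i'" "(\<lambda>n. s n i) \<longlonglongrightarrow> s' i"
  shows "(\<lambda>n. drift L pbar a (s n) i) \<longlonglongrightarrow> drift L pbar a s' i"
  unfolding drift_def using assms by (intro tendsto_intros) auto

lemma closed_stab_region_if_approx:
  assumes finJ: "finite J" and finIn: "\<And>j. j \<in> J \<Longrightarrow> finite (In j)"
    and finPh: "\<And>j. j \<in> J \<Longrightarrow> finite (Ph j)"
    and links: "L \<subseteq> in_roads J In \<times> in_roads J In"
    and a_nn: "\<And>i. i \<in> in_roads J In \<Longrightarrow> a i \<ge> 0"
    and approx: "\<And>\<epsilon>. \<epsilon> > 0 \<Longrightarrow> \<exists>\<rho> s. phase_feasible J In Ph (1 - L0 / T) \<rho> s \<and>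
                   (\<forall>i\<in>in_roads J In. s i \<le> Smax \<and> drift L pbar a s i \<le> \<epsilon>)"
  shows "a \<in> closed_stab_region J In Ph L pbar T L0"
proof -
  define I where "I = in_roads J In"
  define c where "c = 1 - L0 / T"
  define \<epsilon> where "\<epsilon> n = inverse (real (Suc n))" for n
  have "\<forall>n. \<exists>\<rho> s. phase_feasible J In Ph c \<rho> s \<and> (\<forall>i\<in>I. s i \<le> Smax \<and> drift L pbar a s i \<le> \<epsilon> n)"
    using approx unfolding \<epsilon>_def c_def I_def by simp
  then obtain \<rho> s where feas: "\<And>n. phase_feasible J In Ph c (\<rho> n) (s n)"
    and approx_n: "\<And>n. \<forall>i\<in>I. s n i \<le> Smax \<and> drift L pbar a (s n) i \<le> \<epsilon> n"
    by metis
  \<comment> \<open>Extract one subsequence along which all coordinates of \<open>\<rho>\<close> and \<open>s\<close> converge.\<close>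
  define K where "K = Inl ` I \<union> Inr ` Sigma J Ph"
  define f where "f n = case_sum (s n) (\<lambda>(j, \<sigma>). \<rho> n j \<sigma>)" for n
  have "finite K" using finJ finIn finPh by (auto simp: K_def I_def in_roads_def)
  moreover have "\<bar>f n k\<bar> \<le> max Smax \<bar>c\<bar>" if "k \<in> K" for n k
    using that feas[of n] approx_n[of n] phase_feasible_share_le[OF feas[of n] _ _ finPh]
    by (fastforce simp: K_def f_def phase_feasible_def I_def)
  ultimately obtain r g where r: "strict_mono r" and g: "\<forall>k\<in>K. (\<lambda>n. f (r n) k) \<longlonglongrightarrow> g k"
    using bounded_family_convergent_subseq by blast
  define \<rho>' where "\<rho>' j \<sigma> = g (Inr (j, \<sigma>))" for j \<sigma>
  define s' where "s' i = g (Inl i)" for i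
  have lim_s: "(\<lambda>n. s (r n) i) \<longlonglongrightarrow> s' i" if "i \<in> I" for i
    using g[rule_format, of "Inl i"] that by (simp add: K_def f_def s'_def)
  have lim_\<rho>: "(\<lambda>n. \<rho> (r n) j \<sigma>) \<longlonglongrightarrow> \<rho>' j \<sigma>" if "j \<in> J" "\<sigma> \<in> Ph j" for j \<sigma>
    using g[rule_format, of "Inr (j, \<sigma>)"] that by (simp add: K_def f_def \<rho>'_def)
  have "phase_feasible J In Ph c \<rho>' s'"
    using feas finPh lim_\<rho> lim_s unfolding I_def by (rule phase_feasible_limit)
  moreover have "drift L pbar a s' i \<le> 0" if i: "i \<in> I" for i
  proof -
    have "(\<lambda>n. drift L pbar a (s (r n)) i) \<longlonglongrightarrow> drift L pbar a s' i"
      using links i by (intro drift_limit lim_s) (auto simp: I_def)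
    moreover have "(\<lambda>n. \<epsilon> (r n)) \<longlonglongrightarrow> 0"
      using LIMSEQ_subseq_LIMSEQ[OF LIMSEQ_inverse_real_of_nat r] by (simp add: \<epsilon>_def comp_def)
    ultimately show ?thesis
      using approx_n i by (intro LIMSEQ_le) auto
  qed
  ultimately show ?thesis
    using a_nn unfolding closed_stab_region_iff c_def I_def by blast
qed

lemma phase_feasible_average:
  assumes K: "finite K" "K \<noteq> {}" and feas: "\<And>k. k \<in> K \<Longrightarrow> phase_feasible J In Ph c (\<rho> k) (s k)"
  shows "phase_feasible J In Ph c (\<lambda>j \<sigma>. (\<Sum>k\<in>K. \<rho> k j \<sigma>) / card K) (\<lambda>i. (\<Sum>k\<in>K. s k i) / card K)"
  unfolding phase_feasible_def
proof (intro conjI ballI)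
  fix j \<sigma> assume "j \<in> J" "\<sigma> \<in> Ph j"
  then show "0 \<le> (\<Sum>k\<in>K. \<rho> k j \<sigma>) / card K"
    using feas by (intro divide_nonneg_nonneg sum_nonneg) (auto simp: phase_feasible_def)
next
  fix i assume "i \<in> in_roads J In"
  then show "0 \<le> (\<Sum>k\<in>K. s k i) / card K"
    using feas by (intro divide_nonneg_nonneg sum_nonneg) (auto simp: phase_feasible_def)
next
  fix j assume j: "j \<in> J"
  have "(\<Sum>\<sigma>\<in>Ph j. (\<Sum>k\<in>K. \<rho> k j \<sigma>) / card K) = (\<Sum>k\<in>K. \<Sum>\<sigma>\<in>Ph j. \<rho> k j \<sigma>) / card K"
    by (simp add: sum_divide_distrib[symmetric] sum.swap[of _ "Ph j"])
  also have "\<dots> \<le> (\<Sum>k\<in>K. c) / card K"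
    using feas j by (intro divide_right_mono sum_mono) (auto simp: phase_feasible_def)
  also have "\<dots> = c" using K by simp
  finally show "(\<Sum>\<sigma>\<in>Ph j. (\<Sum>k\<in>K. \<rho> k j \<sigma>) / card K) \<le> c" .
next
  fix j i assume j: "j \<in> J" and i: "i \<in> In j"
  have "(\<Sum>k\<in>K. s k i) / card K \<le> (\<Sum>k\<in>K. \<Sum>\<sigma>\<in>Ph j. \<rho> k j \<sigma> * \<sigma> i) / card K"
    using feas j i by (intro divide_right_mono sum_mono) (auto simp: phase_feasible_def)
  also have "\<dots> = (\<Sum>\<sigma>\<in>Ph j. (\<Sum>k\<in>K. \<rho> k j \<sigma>) / card K * \<sigma> i)"
    by (simp add: sum_divide_distrib sum_distrib_right sum.swap[of _ K])
  finally show "(\<Sum>k\<in>K. s k i) / card K \<le> (\<Sum>\<sigma>\<in>Ph j. (\<Sum>k\<in>K. \<rho> k j \<sigma>) / card K * \<sigma> i)" .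
qed

lemma drift_average:
  assumes "finite K" "K \<noteq> {}"
  shows "drift L pbar a (\<lambda>i. (\<Sum>k\<in>K. s k i) / card K) i = (\<Sum>k\<in>K. drift L pbar a (s k) i) / card K"
  using assms
  by (simp add: drift_def sum.distrib sum_subtractf sum_divide_distrib[symmetric]
      sum_distrib_right sum.swap[of _ K] add_divide_distrib diff_divide_distrib)

(* The pairs (t, u) with \<open>1 \<le> u < t \<le> \<tau>\<close>; the time-averaged queue bounds the increments
   summed over these pairs, and there are \<open>\<tau>(\<tau> - 1)/2\<close> of them. *)
definition time_pairs :: "nat \<Rightarrow> (nat \<times> nat) set" where
  "time_pairs \<tau> = Sigma {1..\<tau>} (\<lambda>t. {1..<t})"

lemma finite_time_pairs: "finite (time_pairs \<tau>)"
  by (simp add: time_pairs_def)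

lemma card_time_pairs: "2 * real (card (time_pairs \<tau>)) = real \<tau> * (real \<tau> - 1)"
proof -
  have "2 * (\<Sum>t=1..\<tau>. real (t - 1)) = real \<tau> * (real \<tau> - 1)"
    by (induction \<tau>) (auto simp: algebra_simps)
  then show ?thesis by (simp add: time_pairs_def of_nat_sum)
qed

lemma sum_time_pairs: "(\<Sum>k\<in>time_pairs \<tau>. f (snd k)) = (\<Sum>t\<in>{1..\<tau>}. \<Sum>u\<in>{1..<t}. f u)"
  by (simp add: time_pairs_def sum.Sigma split_def)

lemma (in prob_space) integral_mult_indep_sets:
  fixes X Y :: "'a \<Rightarrow> real"
  assumes indep: "indep_set (sets V) (sets W)"
    and space: "space V = space M" "space W = space M"
    and X: "X \<in> borel_measurable V" and Y: "Y \<in> borel_measurable W"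
    and int: "integrable M X" "integrable M Y"
  shows "(\<integral>\<omega>. X \<omega> * Y \<omega> \<partial>M) = (\<integral>\<omega>. X \<omega> \<partial>M) * (\<integral>\<omega>. Y \<omega> \<partial>M)"
proof -
  have "sigma_sets (space M) {X -` A \<inter> space M | A. A \<in> sets borel} \<subseteq> sets V"
    using X space by (simp add: measurable_iff_sets sets_vimage_algebra)
  moreover have "sigma_sets (space M) {Y -` A \<inter> space M | A. A \<in> sets borel} \<subseteq> sets W"
    using Y space by (simp add: measurable_iff_sets sets_vimage_algebra)
  ultimately have "indep_var borel X borel Y"
    using indep int unfolding indep_var_eq indep_set_def
    by (force elim!: indep_sets_mono_sets split: bool.split)
  then show ?thesis using int by (rule indep_var_lebesgue_integral)
qed

lemma integral_component_eq_if_distr_eq: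
  fixes X Y :: "'a \<Rightarrow> 'i \<Rightarrow> real"
  assumes X: "\<And>i. i \<in> I \<Longrightarrow> (\<lambda>\<omega>. X \<omega> i) \<in> borel_measurable M"
    and Y: "\<And>i. i \<in> I \<Longrightarrow> (\<lambda>\<omega>. Y \<omega> i) \<in> borel_measurable M"
    and same: "distr M (PiM I (\<lambda>_. borel)) (\<lambda>\<omega>. restrict (X \<omega>) I)
             = distr M (PiM I (\<lambda>_. borel)) (\<lambda>\<omega>. restrict (Y \<omega>) I)"
    and i: "i \<in> I"
  shows "integrable M (\<lambda>\<omega>. X \<omega> i) \<longleftrightarrow> integrable M (\<lambda>\<omega>. Y \<omega> i)"
    and "(\<integral>\<omega>. X \<omega> i \<partial>M) = (\<integral>\<omega>. Y \<omega> i \<partial>M)"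
proof -
  have mX: "(\<lambda>\<omega>. restrict (X \<omega>) I) \<in> measurable M (PiM I (\<lambda>_. borel))"
    and mY: "(\<lambda>\<omega>. restrict (Y \<omega>) I) \<in> measurable M (PiM I (\<lambda>_. borel))"
    using X Y by (auto intro: measurable_restrict)
  have c: "(\<lambda>x. x i) \<in> borel_measurable (PiM I (\<lambda>_. borel))"
    using i by (rule measurable_component_singleton)
  show "integrable M (\<lambda>\<omega>. X \<omega> i) \<longleftrightarrow> integrable M (\<lambda>\<omega>. Y \<omega> i)"
    using integrable_distr_eq[OF mX c] integrable_distr_eq[OF mY c] same i by simp
  show "(\<integral>\<omega>. X \<omega> i \<partial>M) = (\<integral>\<omega>. Y \<omega> i \<partial>M)"
    using integral_distr[OF mX c] integral_distr[OF mY c] same i by simp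
qed

lemma (in prob_space) integral_eq_by_real_cond_exp_gen_sigma:
  assumes X: "\<And>i. i \<in> I \<Longrightarrow> (\<lambda>\<omega>. X \<omega> i) \<in> borel_measurable M"
    and f: "integrable M f" and h: "h \<in> borel_measurable M"
    and cond: "AE \<omega> in M. real_cond_exp M (gen_sigma M I X) f \<omega> = h \<omega>"
  shows "(\<integral>\<omega>. f \<omega> \<partial>M) = (\<integral>\<omega>. h \<omega> \<partial>M)"
proof -
  have "(\<lambda>\<omega>. restrict (X \<omega>) I) \<in> measurable M (PiM I (\<lambda>_. borel))"
    using X by (auto intro: measurable_restrict)
  then have "subalgebra M (gen_sigma M I X)"
    by (simp add: subalgebra_def gen_sigma_def measurable_iff_sets)
  then interpret finite_measure_subalgebra M "gen_sigma M I X"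
    by unfold_locales
  have "(\<integral>\<omega>. f \<omega> \<partial>M) = (\<integral>\<omega>. real_cond_exp M (gen_sigma M I X) f \<omega> \<partial>M)"
    using real_cond_exp_int(2)[OF f] by simp
  also have "\<dots> = (\<integral>\<omega>. h \<omega> \<partial>M)"
    using real_cond_exp_int(1)[OF f] h cond by (intro integral_cong_AE) auto
  finally show ?thesis .
qed

lemma integral_le_nn_integral:
  fixes f :: "'a \<Rightarrow> real"
  assumes "integrable M f"
  shows "ennreal (\<integral>x. f x \<partial>M) \<le> (\<integral>\<^sup>+x. ennreal (f x) \<partial>M)"
proof -
  have "ennreal (\<integral>x. f x \<partial>M) \<le> ennreal (\<integral>x. max (f x) 0 \<partial>M)"
    using assms by (intro ennreal_leI integral_mono) auto
  also have "\<dots> = (\<integral>\<^sup>+x. ennreal (max (f x) 0) \<partial>M)"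
    using assms by (intro nn_integral_eq_integral[symmetric]) auto
  also have "\<dots> = (\<integral>\<^sup>+x. ennreal (f x) \<partial>M)"
    by (intro nn_integral_cong) (auto simp: max_def ennreal_neg)
  finally show ?thesis .
qed

lemma sum_increments_le:
  fixes x g :: "nat \<Rightarrow> real"
  assumes step: "\<And>u. x (Suc u) = x u + g u" and start: "x 1 \<ge> 0" and t: "t \<ge> 1"
  shows "(\<Sum>u\<in>{1..<t}. g u) \<le> x t"
proof -
  have "x t = x 1 + (\<Sum>u\<in>{1..<t}. g u)"
    using t by (induction t rule: dec_induct) (auto simp: step)
  then show ?thesis using start by simp
qed

lemma nonneg_if_Nats: "(x::real) \<in> \<nat> \<Longrightarrow> 0 \<le> x"
  by (auto elim: Nats_cases)

(* The road network model under an arbitrary policy P. *)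
locale road_network = prob_space M
  for M :: "'w measure" +
  fixes J :: "'j set" and In :: "'j \<Rightarrow> 'r set" and jun :: "'r \<Rightarrow> 'j"
    and Ph :: "'j \<Rightarrow> ('r \<Rightarrow> real) set" and L :: "('r \<times> 'r) set"
    and T L0 Smax :: real
    and Q S A :: "nat \<Rightarrow> 'w \<Rightarrow> 'r \<Rightarrow> real"
    and p :: "nat \<Rightarrow> 'w \<Rightarrow> 'r \<Rightarrow> 'r \<Rightarrow> real"
    and pbar :: "'r \<Rightarrow> 'r \<Rightarrow> real"
    and P :: "nat \<Rightarrow> 'w \<Rightarrow> 'j \<Rightarrow> ('r \<Rightarrow> real) \<Rightarrow> real"
    and a :: "'r \<Rightarrow> real"
    and I :: "'r set"
  assumes I_def: "I = in_roads J In"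
    and finJ: "finite J"
    and finIn: "\<And>j. j \<in> J \<Longrightarrow> finite (In j)"
    and disj: "\<And>j j'. j \<in> J \<Longrightarrow> j' \<in> J \<Longrightarrow> j \<noteq> j' \<Longrightarrow> In j \<inter> In j' = {}"
    and jun: "\<And>i. i \<in> I \<Longrightarrow> jun i \<in> J \<and> i \<in> In (jun i)"
    and finPh: "\<And>j. j \<in> J \<Longrightarrow> finite (Ph j)"
    and links: "L \<subseteq> I \<times> I"
    and Q_nat: "\<And>t \<omega> i. \<omega> \<in> space M \<Longrightarrow> i \<in> I \<Longrightarrow> Q t \<omega> i \<in> \<nat>"
    and Q_meas: "\<And>t i. i \<in> I \<Longrightarrow> (\<lambda>\<omega>. Q t \<omega> i) \<in> borel_measurable M"
    and S_nat: "\<And>t \<omega> i. \<omega> \<in> space M \<Longrightarrow> i \<in> I \<Longrightarrow> S t \<omega> i \<in> \<nat>"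
    and S_bound: "\<And>t \<omega> i. \<omega> \<in> space M \<Longrightarrow> i \<in> I \<Longrightarrow> S t \<omega> i \<le> Smax"
    and S_meas: "\<And>t i. i \<in> I \<Longrightarrow> (\<lambda>\<omega>. S t \<omega> i) \<in> borel_measurable M"
    and P_meas: "\<And>t j \<sigma>. j \<in> J \<Longrightarrow> \<sigma> \<in> Ph j \<Longrightarrow> (\<lambda>\<omega>. P t \<omega> j \<sigma>) \<in> borel_measurable M"
    and P_nonneg: "\<And>t \<omega> j \<sigma>. \<omega> \<in> space M \<Longrightarrow> j \<in> J \<Longrightarrow> \<sigma> \<in> Ph j \<Longrightarrow> P t \<omega> j \<sigma> \<ge> 0"
    and P_sum: "\<And>t \<omega> j. \<omega> \<in> space M \<Longrightarrow> j \<in> J \<Longrightarrow> (\<Sum>\<sigma>\<in>Ph j. P t \<omega> j \<sigma>) \<le> 1 - L0 / T"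
    and S_cond: "\<And>t i. i \<in> I \<Longrightarrow>
        AE \<omega> in M. real_cond_exp M (gen_sigma M I (Q t)) (\<lambda>\<omega>. S t \<omega> i) \<omega>
                    = (\<Sum>\<sigma>\<in>Ph (jun i). \<sigma> i * P t \<omega> (jun i) \<sigma>)"
    and p_range: "\<And>t \<omega> i' i. \<omega> \<in> space M \<Longrightarrow> (i', i) \<in> L \<Longrightarrow> 0 \<le> p t \<omega> i' i \<and> p t \<omega> i' i \<le> 1"
    and p_meas: "\<And>t i' i. (i', i) \<in> L \<Longrightarrow> (\<lambda>\<omega>. p t \<omega> i' i) \<in> borel_measurable M"
    and p_mean: "\<And>t i' i. (i', i) \<in> L \<Longrightarrow> (\<integral>\<omega>. p t \<omega> i' i \<partial>M) = pbar i' i"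
    and p_indep: "\<And>t. indep_set
        (sets (vimage_algebra (space M) (\<lambda>\<omega>. \<lambda>l\<in>L. p t \<omega> (fst l) (snd l)) (PiM L (\<lambda>_. borel))))
        (sets (vimage_algebra (space M) (\<lambda>\<omega>. (restrict (Q t \<omega>) I, restrict (S t \<omega>) I))
                 (PiM I (\<lambda>_. borel) \<Otimes>\<^sub>M PiM I (\<lambda>_. borel))))"
    and A_nat: "\<And>t \<omega> i. \<omega> \<in> space M \<Longrightarrow> i \<in> I \<Longrightarrow> A t \<omega> i \<in> \<nat>"
    and A_meas: "\<And>t i. i \<in> I \<Longrightarrow> (\<lambda>\<omega>. A t \<omega> i) \<in> borel_measurable M"
    and A_ident: "\<And>t. t \<ge> 1 \<Longrightarrow> distr M (PiM I (\<lambda>_. borel)) (\<lambda>\<omega>. restrict (A t \<omega>) I)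
                                 = distr M (PiM I (\<lambda>_. borel)) (\<lambda>\<omega>. restrict (A 1 \<omega>) I)"
    and A_mean: "\<And>i. i \<in> I \<Longrightarrow> integrable M (\<lambda>\<omega>. A 1 \<omega> i) \<and> (\<integral>\<omega>. A 1 \<omega> i \<partial>M) = a i"
    and dyn: "\<And>t \<omega> i. \<omega> \<in> space M \<Longrightarrow> i \<in> I \<Longrightarrow>
        Q (Suc t) \<omega> i = Q t \<omega> i - min (S t \<omega> i) (Q t \<omega> i) + A t \<omega> i
          + (\<Sum>i'\<in>{i'. (i', i) \<in> L}. min (S t \<omega> i') (Q t \<omega> i') * p t \<omega> i' i)"
begin

lemma finite_I: "finite I"
  using finJ finIn by (auto simp: I_def in_roads_def)

definition departures :: "nat \<Rightarrow> 'w \<Rightarrow> 'r \<Rightarrow> real" where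
  "departures t \<omega> i = min (S t \<omega> i) (Q t \<omega> i)"

definition mean_departures :: "nat \<Rightarrow> 'r \<Rightarrow> real" where
  "mean_departures t i = (\<integral>\<omega>. departures t \<omega> i \<partial>M)"

definition mean_shares :: "nat \<Rightarrow> 'j \<Rightarrow> ('r \<Rightarrow> real) \<Rightarrow> real" where
  "mean_shares t j \<sigma> = (\<integral>\<omega>. P t \<omega> j \<sigma> \<partial>M)"

definition avg_queue :: "nat \<Rightarrow> ennreal" where
  "avg_queue \<tau> = (\<integral>\<^sup>+\<omega>. ennreal ((1 / real \<tau>) * (\<Sum>t\<in>{1..\<tau>}. \<Sum>i\<in>I. Q t \<omega> i)) \<partial>M)"

lemma departures_bounds:
  assumes "\<omega> \<in> space M" "i \<in> I"
  shows "0 \<le> departures t \<omega> i" "departures t \<omega> i \<le> S t \<omega> i" "departures t \<omega> i \<le> Smax"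
proof -
  show "0 \<le> departures t \<omega> i" "departures t \<omega> i \<le> S t \<omega> i"
    using assms Q_nat S_nat by (auto simp: departures_def intro!: nonneg_if_Nats)
  then show "departures t \<omega> i \<le> Smax"
    using S_bound[OF assms, of t] by linarith
qed

lemma queue_lower_bound:
  assumes \<omega>: "\<omega> \<in> space M" and i: "i \<in> I" and t: "t \<ge> 1"
  shows "(\<Sum>u\<in>{1..<t}. drift L (p u \<omega>) (A u \<omega>) (departures u \<omega>) i) \<le> Q t \<omega> i"
proof (rule sum_increments_le[where x = "\<lambda>t. Q t \<omega> i", OF _ _ t])
  show "Q (Suc u) \<omega> i = Q u \<omega> i + drift L (p u \<omega>) (A u \<omega>) (departures u \<omega>) i" for u
    using dyn[OF \<omega> i] by (simp add: drift_def departures_def)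
  show "0 \<le> Q 1 \<omega> i"
    using Q_nat[OF \<omega> i] by (rule nonneg_if_Nats)
qed

lemma shares_bounds:
  assumes "\<omega> \<in> space M" "j \<in> J" "\<sigma> \<in> Ph j"
  shows "0 \<le> P t \<omega> j \<sigma> \<and> P t \<omega> j \<sigma> \<le> 1 - L0 / T"
proof -
  have "P t \<omega> j \<sigma> \<le> (\<Sum>\<sigma>'\<in>Ph j. P t \<omega> j \<sigma>')"
    using assms finPh P_nonneg by (intro member_le_sum) auto
  then show ?thesis using assms P_nonneg P_sum[of \<omega> j t] by fastforce
qed

lemma integrable_departures: "i \<in> I \<Longrightarrow> integrable M (\<lambda>\<omega>. departures t \<omega> i)"
  using departures_bounds[of _ i t] S_meas Q_meas
  by (intro integrable_const_bound[where B = Smax] AE_I2) (auto simp: departures_def)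

lemma integrable_turning: "(i', i) \<in> L \<Longrightarrow> integrable M (\<lambda>\<omega>. p t \<omega> i' i)"
  using p_range[of _ i' i t] p_meas by (intro integrable_const_bound[where B = 1] AE_I2) auto

lemma integrable_shares: "j \<in> J \<Longrightarrow> \<sigma> \<in> Ph j \<Longrightarrow> integrable M (\<lambda>\<omega>. P t \<omega> j \<sigma>)"
  using shares_bounds[of _ j \<sigma> t] P_meas
  by (intro integrable_const_bound[where B = "1 - L0 / T"] AE_I2) auto

(* Independence of the turning proportions: routed flow has mean \<open>mean departures * pbar\<close>. *)
lemma integral_departures_turning:
  assumes l: "(i', i) \<in> L"
  shows "(\<integral>\<omega>. departures t \<omega> i' * p t \<omega> i' i \<partial>M) = mean_departures t i' * pbar i' i"
proof -
  define turning where "turning = (\<lambda>\<omega>. \<lambda>l\<in>L. p t \<omega> (fst l) (snd l))"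
  define state where "state = (\<lambda>\<omega>. (restrict (Q t \<omega>) I, restrict (S t \<omega>) I))"
  define V where "V = vimage_algebra (space M) turning (PiM L (\<lambda>_. borel))"
  define W where "W = vimage_algebra (space M) state (PiM I (\<lambda>_. borel) \<Otimes>\<^sub>M PiM I (\<lambda>_. borel))"
  have i': "i' \<in> I" using l links by auto
  have "(\<lambda>\<omega>. turning \<omega> (i', i)) \<in> borel_measurable V"
    unfolding V_def
    by (rule measurable_compose[OF measurable_vimage_algebra1 measurable_component_singleton[OF l]])
       (auto simp: turning_def space_PiM)
  then have turning_meas: "(\<lambda>\<omega>. p t \<omega> i' i) \<in> borel_measurable V"
    using l by (simp add: turning_def)
  have "(\<lambda>\<omega>. min (snd (state \<omega>) i') (fst (state \<omega>) i')) \<in> borel_measurable W"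
    unfolding W_def using i'
    by (intro measurable_compose[OF measurable_vimage_algebra1] borel_measurable_min
        measurable_compose[OF measurable_fst measurable_component_singleton]
        measurable_compose[OF measurable_snd measurable_component_singleton])
       (auto simp: state_def space_PiM space_pair_measure)
  then have departures_meas: "(\<lambda>\<omega>. departures t \<omega> i') \<in> borel_measurable W"
    using i' by (simp add: state_def departures_def)
  have "(\<integral>\<omega>. p t \<omega> i' i * departures t \<omega> i' \<partial>M)
      = (\<integral>\<omega>. p t \<omega> i' i \<partial>M) * (\<integral>\<omega>. departures t \<omega> i' \<partial>M)"
    using p_indep[of t] turning_meas departures_meas integrable_turning[OF l] integrable_departures[OF i']
    by (intro integral_mult_indep_sets) (simp_all add: V_def W_def turning_def state_def)
  then show ?thesis
    using p_mean[OF l] by (simp add: mean_departures_def mult.commute)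
qed

lemma arrivals_mean:
  assumes "t \<ge> 1" "i \<in> I"
  shows "integrable M (\<lambda>\<omega>. A t \<omega> i)" "(\<integral>\<omega>. A t \<omega> i \<partial>M) = a i"
  using integral_component_eq_if_distr_eq[OF A_meas A_meas A_ident[OF assms(1)] assms(2)]
    A_mean[OF assms(2)] by auto

lemma expected_increment:
  assumes t: "t \<ge> 1" and i: "i \<in> I"
  shows "integrable M (\<lambda>\<omega>. drift L (p t \<omega>) (A t \<omega>) (departures t \<omega>) i)"
    and "(\<integral>\<omega>. drift L (p t \<omega>) (A t \<omega>) (departures t \<omega>) i \<partial>M) = drift L pbar a (mean_departures t) i"
proof -
  have routed: "integrable M (\<lambda>\<omega>. departures t \<omega> i' * p t \<omega> i' i)" if "(i', i) \<in> L" for i'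
  proof (rule integrable_const_bound[where B = Smax])
    show "AE \<omega> in M. norm (departures t \<omega> i' * p t \<omega> i' i) \<le> Smax"
    proof (rule AE_I2)
      fix \<omega> assume \<omega>: "\<omega> \<in> space M"
      have "i' \<in> I" using that links by auto
      then have "0 \<le> departures t \<omega> i'" "departures t \<omega> i' \<le> Smax"
        using departures_bounds[OF \<omega>] by auto
      moreover have "0 \<le> p t \<omega> i' i" "p t \<omega> i' i \<le> 1" using p_range[OF \<omega> that] by auto
      ultimately show "norm (departures t \<omega> i' * p t \<omega> i' i) \<le> Smax"
        using mult_mono[of _ Smax _ 1] by auto
    qed
    show "(\<lambda>\<omega>. departures t \<omega> i' * p t \<omega> i' i) \<in> borel_measurable M"
      using integrable_departures integrable_turning[OF that] that links by auto
  qed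
  define routed_in where "routed_in = (\<lambda>\<omega>. \<Sum>i'\<in>{i'. (i', i) \<in> L}. departures t \<omega> i' * p t \<omega> i' i)"
  have routed_in: "integrable M routed_in"
    "(\<integral>\<omega>. routed_in \<omega> \<partial>M) = (\<Sum>i'\<in>{i'. (i', i) \<in> L}. mean_departures t i' * pbar i' i)"
    using routed by (auto simp: routed_in_def integral_departures_turning)
  have "drift L (p t \<omega>) (A t \<omega>) (departures t \<omega>) i = A t \<omega> i + routed_in \<omega> - departures t \<omega> i" for \<omega>
    by (simp add: drift_def routed_in_def)
  then show "integrable M (\<lambda>\<omega>. drift L (p t \<omega>) (A t \<omega>) (departures t \<omega>) i)"
    and "(\<integral>\<omega>. drift L (p t \<omega>) (A t \<omega>) (departures t \<omega>) i \<partial>M) = drift L pbar a (mean_departures t) i"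
    using routed_in arrivals_mean[OF t i] integrable_departures[OF i]
    by (simp_all add: drift_def mean_departures_def)
qed

(* Expected departures are at most the expected service, i.e. the phase-weighted capacity. *)
lemma mean_departures_le_capacity:
  assumes j: "j \<in> J" and i: "i \<in> In j"
  shows "mean_departures t i \<le> (\<Sum>\<sigma>\<in>Ph j. mean_shares t j \<sigma> * \<sigma> i)"
proof -
  have iI: "i \<in> I" using i j by (auto simp: I_def in_roads_def)
  have jun_i: "jun i = j" using jun[OF iI] disj[of j "jun i"] i j by auto
  have S_int: "integrable M (\<lambda>\<omega>. S t \<omega> i)"
    using S_meas[OF iI] S_bound[OF _ iI] S_nat[OF _ iI] nonneg_if_Nats
    by (intro integrable_const_bound[where B = Smax] AE_I2) auto
  have "mean_departures t i \<le> (\<integral>\<omega>. S t \<omega> i \<partial>M)"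
    unfolding mean_departures_def
    using integrable_departures[OF iI] S_int departures_bounds[OF _ iI] by (intro integral_mono) auto
  also have "\<dots> = (\<integral>\<omega>. (\<Sum>\<sigma>\<in>Ph j. \<sigma> i * P t \<omega> j \<sigma>) \<partial>M)"
    using Q_meas S_int S_cond[OF iI, of t] P_meas j jun_i
    by (intro integral_eq_by_real_cond_exp_gen_sigma) auto
  also have "\<dots> = (\<Sum>\<sigma>\<in>Ph j. mean_shares t j \<sigma> * \<sigma> i)"
    using integrable_shares j by (simp add: mean_shares_def mult.commute)
  finally show ?thesis .
qed

lemma mean_schedule_feasible:
  "phase_feasible J In Ph (1 - L0 / T) (mean_shares t) (mean_departures t)"
  unfolding phase_feasible_def
proof (intro conjI ballI)
  fix j \<sigma> assume "j \<in> J" "\<sigma> \<in> Ph j"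
  then show "0 \<le> mean_shares t j \<sigma>"
    unfolding mean_shares_def using shares_bounds by (intro integral_nonneg_AE AE_I2) auto
next
  fix i assume "i \<in> in_roads J In"
  then show "0 \<le> mean_departures t i"
    unfolding mean_departures_def using departures_bounds by (intro integral_nonneg_AE AE_I2) (auto simp: I_def)
next
  fix j assume j: "j \<in> J"
  have "(\<Sum>\<sigma>\<in>Ph j. mean_shares t j \<sigma>) = (\<integral>\<omega>. (\<Sum>\<sigma>\<in>Ph j. P t \<omega> j \<sigma>) \<partial>M)"
    unfolding mean_shares_def using integrable_shares j by simp
  also have "\<dots> \<le> 1 - L0 / T"
    using integrable_shares j P_sum by (intro integral_le_const AE_I2) auto
  finally show "(\<Sum>\<sigma>\<in>Ph j. mean_shares t j \<sigma>) \<le> 1 - L0 / T" .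
next
  fix j i assume "j \<in> J" "i \<in> In j"
  then show "mean_departures t i \<le> (\<Sum>\<sigma>\<in>Ph j. mean_shares t j \<sigma> * \<sigma> i)"
    by (rule mean_departures_le_capacity)
qed

lemma mean_departures_le: "i \<in> I \<Longrightarrow> mean_departures t i \<le> Smax"
  unfolding mean_departures_def
  using integrable_departures departures_bounds by (intro integral_le_const AE_I2) auto

lemma arrival_rate_nonneg: "i \<in> I \<Longrightarrow> a i \<ge> 0"
  using arrivals_mean[of 1 i] A_nat nonneg_if_Nats by (metis integral_nonneg_AE AE_I2 order_refl)

(* Taking expectations in the sample-path bound: a bounded time-averaged queue forces small
   accumulated drift. *)
lemma drift_sum_bound:
  assumes \<tau>: "\<tau> \<ge> 1" and B: "avg_queue \<tau> \<le> ennreal B" "B \<ge> 0" and i: "i \<in> I"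
  shows "(\<Sum>k\<in>time_pairs \<tau>. drift L pbar a (mean_departures (snd k)) i) \<le> real \<tau> * B"
proof -
  define X where "X \<omega> = (\<Sum>k\<in>time_pairs \<tau>. drift L (p (snd k) \<omega>) (A (snd k) \<omega>) (departures (snd k) \<omega>) i)" for \<omega>
  have snd_ge: "snd k \<ge> 1" if "k \<in> time_pairs \<tau>" for k
    using that by (auto simp: time_pairs_def)
  have X_int: "integrable M X"
    unfolding X_def using expected_increment(1)[OF snd_ge i] by auto
  have X_mean: "(\<integral>\<omega>. X \<omega> \<partial>M) = (\<Sum>k\<in>time_pairs \<tau>. drift L pbar a (mean_departures (snd k)) i)"
    unfolding X_def using expected_increment[OF snd_ge i] by simp
  have X_le: "(1 / real \<tau>) * X \<omega> \<le> (1 / real \<tau>) * (\<Sum>t\<in>{1..\<tau>}. \<Sum>i\<in>I. Q t \<omega> i)"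
    if \<omega>: "\<omega> \<in> space M" for \<omega>
  proof -
    have "X \<omega> = (\<Sum>t\<in>{1..\<tau>}. \<Sum>u\<in>{1..<t}. drift L (p u \<omega>) (A u \<omega>) (departures u \<omega>) i)"
      unfolding X_def by (rule sum_time_pairs)
    also have "\<dots> \<le> (\<Sum>t\<in>{1..\<tau>}. Q t \<omega> i)"
      using queue_lower_bound[OF \<omega> i] by (intro sum_mono) auto
    also have "\<dots> \<le> (\<Sum>t\<in>{1..\<tau>}. \<Sum>i\<in>I. Q t \<omega> i)"
      using i finite_I Q_nat[OF \<omega>] nonneg_if_Nats by (intro sum_mono member_le_sum) auto
    finally show ?thesis by (simp add: divide_right_mono)
  qed
  have "ennreal ((1 / real \<tau>) * (\<integral>\<omega>. X \<omega> \<partial>M)) \<le> (\<integral>\<^sup>+\<omega>. ennreal ((1 / real \<tau>) * X \<omega>) \<partial>M)"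
    using integral_le_nn_integral[of M "\<lambda>\<omega>. (1 / real \<tau>) * X \<omega>"] X_int by simp
  also have "\<dots> \<le> avg_queue \<tau>"
    unfolding avg_queue_def using X_le by (intro nn_integral_mono ennreal_leI) auto
  finally have "(1 / real \<tau>) * (\<integral>\<omega>. X \<omega> \<partial>M) \<le> B"
    using B by (metis ennreal_le_iff order_trans)
  then show ?thesis using \<tau> X_mean by (simp add: field_simps)
qed

lemma approx_feasible_if_bounded:
  assumes \<tau>: "\<tau> \<ge> 2" and B: "avg_queue \<tau> \<le> ennreal B" "B \<ge> 0"
  shows "\<exists>\<rho> s. phase_feasible J In Ph (1 - L0 / T) \<rho> s \<and>
           (\<forall>i\<in>I. s i \<le> Smax \<and> drift L pbar a s i \<le> 2 * B / (real \<tau> - 1))"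
proof -
  define K where "K = time_pairs \<tau>"
  have "(2, 1) \<in> K" using \<tau> by (simp add: K_def time_pairs_def)
  then have K: "finite K" "K \<noteq> {}"
    using finite_time_pairs by (auto simp: K_def)
  have card_K: "real (card K) = real \<tau> * (real \<tau> - 1) / 2"
    using card_time_pairs[of \<tau>] by (simp add: K_def)
  define \<rho> where "\<rho> j \<sigma> = (\<Sum>k\<in>K. mean_shares (snd k) j \<sigma>) / card K" for j \<sigma>
  define s where "s i = (\<Sum>k\<in>K. mean_departures (snd k) i) / card K" for i
  have "phase_feasible J In Ph (1 - L0 / T) \<rho> s"
    unfolding \<rho>_def s_def using K mean_schedule_feasible by (rule phase_feasible_average)
  moreover have "s i \<le> Smax" if i: "i \<in> I" for i
  proof -
    have "(\<Sum>k\<in>K. mean_departures (snd k) i) \<le> card K * Smax"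
      using sum_mono[of K "\<lambda>k. mean_departures (snd k) i" "\<lambda>_. Smax"] mean_departures_le[OF i] by simp
    then show ?thesis using K by (simp add: s_def divide_simps mult.commute)
  qed
  moreover have "drift L pbar a s i \<le> 2 * B / (real \<tau> - 1)" if i: "i \<in> I" for i
  proof -
    have "drift L pbar a s i = (\<Sum>k\<in>K. drift L pbar a (mean_departures (snd k)) i) / card K"
      unfolding s_def using K by (rule drift_average)
    also have "\<dots> \<le> real \<tau> * B / card K"
      using drift_sum_bound[OF _ B i] \<tau> by (intro divide_right_mono) (auto simp: K_def)
    also have "\<dots> = 2 * B / (real \<tau> - 1)"
      using \<tau> by (simp add: card_K field_simps)
    finally show ?thesis .
  qed
  ultimately show ?thesis by blast
qed

theorem unstable:
  assumes "a \<notin> closed_stab_region J In Ph L pbar T L0"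
  shows "(avg_queue \<longlongrightarrow> \<infinity>) sequentially"
proof (rule ccontr)
  assume "\<not> (avg_queue \<longlongrightarrow> \<infinity>) sequentially"
  then obtain B where B: "B \<ge> 0" and freq: "\<exists>\<^sub>F \<tau> in sequentially. avg_queue \<tau> \<le> ennreal B"
    by (auto simp: tendsto_top_iff_ennreal not_eventually not_less)
  have "a \<in> closed_stab_region J In Ph L pbar T L0"
  proof (rule closed_stab_region_if_approx[OF finJ finIn finPh links[unfolded I_def]])
    show "a i \<ge> 0" if "i \<in> in_roads J In" for i
      using that arrival_rate_nonneg by (simp add: I_def)
    fix \<epsilon> :: real assume \<epsilon>: "\<epsilon> > 0"
    define N where "N = nat \<lceil>2 * B / \<epsilon>\<rceil> + 2"
    obtain \<tau> where \<tau>: "\<tau> \<ge> N" "avg_queue \<tau> \<le> ennreal B"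
      using freq unfolding frequently_sequentially by blast
    have \<tau>_ge: "\<tau> \<ge> 2" using \<tau>(1) by (simp add: N_def)
    have "2 * B / \<epsilon> < real \<tau> - 1"
      using \<tau>(1) unfolding N_def by linarith
    then have "2 * B / (real \<tau> - 1) \<le> \<epsilon>"
      using \<epsilon> \<tau>_ge by (simp add: divide_le_eq field_simps)
    with \<tau>_ge show "\<exists>\<rho> s. phase_feasible J In Ph (1 - L0 / T) \<rho> s \<and>
        (\<forall>i\<in>in_roads J In. s i \<le> Smax \<and> drift L pbar a s i \<le> \<epsilon>)"
      using approx_feasible_if_bounded[of \<tau> B] \<tau>(2) B unfolding I_def by fastforce
  qed
  then show False using assms by contradiction
qed

end

theorem proposition1:
  fixes J :: "'j set" and In :: "'j \<Rightarrow> 'r set" and jun :: "'r \<Rightarrow> 'j"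
    and Ph :: "'j \<Rightarrow> ('r \<Rightarrow> real) set" and L :: "('r \<times> 'r) set"
    and T L0 Smax :: real
    and M :: "'w measure"
    and Q S A :: "nat \<Rightarrow> 'w \<Rightarrow> 'r \<Rightarrow> real"
    and p :: "nat \<Rightarrow> 'w \<Rightarrow> 'r \<Rightarrow> 'r \<Rightarrow> real"
    and pbar :: "'r \<Rightarrow> 'r \<Rightarrow> real"
    and P :: "nat \<Rightarrow> 'w \<Rightarrow> 'j \<Rightarrow> ('r \<Rightarrow> real) \<Rightarrow> real"
    and a :: "'r \<Rightarrow> real"
  defines "I \<equiv> in_roads J In"
  assumes finJ: "finite J"
    and finIn: "\<And>j. j \<in> J \<Longrightarrow> finite (In j)"
    and disj: "\<And>j j'. j \<in> J \<Longrightarrow> j' \<in> J \<Longrightarrow> j \<noteq> j' \<Longrightarrow> In j \<inter> In j' = {}"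
    and jun: "\<And>i. i \<in> I \<Longrightarrow> jun i \<in> J \<and> i \<in> In (jun i)"
    and finPh: "\<And>j. j \<in> J \<Longrightarrow> finite (Ph j)"
    and Ph_nonneg: "\<And>j \<sigma> i. j \<in> J \<Longrightarrow> \<sigma> \<in> Ph j \<Longrightarrow> i \<in> In j \<Longrightarrow> \<sigma> i \<ge> 0"
    and links: "L \<subseteq> I \<times> I"
    and T_pos: "T > 0" and L0: "0 \<le> L0" "L0 < T"
    and prob: "prob_space M"
    \<comment> \<open>queues: nonnegative integers, random variables\<close>
    and Q_nat: "\<And>t \<omega> i. \<omega> \<in> space M \<Longrightarrow> i \<in> I \<Longrightarrow> Q t \<omega> i \<in> \<nat>"
    and Q_meas: "\<And>t i. i \<in> I \<Longrightarrow> (\<lambda>\<omega>. Q t \<omega> i) \<in> borel_measurable M"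
    \<comment> \<open>potential services: bounded nonnegative integers with prescribed conditional mean\<close>
    and S_nat: "\<And>t \<omega> i. \<omega> \<in> space M \<Longrightarrow> i \<in> I \<Longrightarrow> S t \<omega> i \<in> \<nat>"
    and S_bound: "\<And>t \<omega> i. \<omega> \<in> space M \<Longrightarrow> i \<in> I \<Longrightarrow> S t \<omega> i \<le> Smax"
    and S_meas: "\<And>t i. i \<in> I \<Longrightarrow> (\<lambda>\<omega>. S t \<omega> i) \<in> borel_measurable M"
    \<comment> \<open>policy: service proportions\<close>
    and P_meas: "\<And>t j \<sigma>. j \<in> J \<Longrightarrow> \<sigma> \<in> Ph j \<Longrightarrow> (\<lambda>\<omega>. P t \<omega> j \<sigma>) \<in> borel_measurable M"
    and P_nonneg: "\<And>t \<omega> j \<sigma>. \<omega> \<in> space M \<Longrightarrow> j \<in> J \<Longrightarrow> \<sigma> \<in> Ph j \<Longrightarrow> P t \<omega> j \<sigma> \<ge> 0"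
    and P_sum: "\<And>t \<omega> j. \<omega> \<in> space M \<Longrightarrow> j \<in> J \<Longrightarrow> (\<Sum>\<sigma>\<in>Ph j. P t \<omega> j \<sigma>) \<le> 1 - L0 / T"
    and S_cond: "\<And>t i. i \<in> I \<Longrightarrow>
        AE \<omega> in M. real_cond_exp M (gen_sigma M I (Q t)) (\<lambda>\<omega>. S t \<omega> i) \<omega>
                    = (\<Sum>\<sigma>\<in>Ph (jun i). \<sigma> i * P t \<omega> (jun i) \<sigma>)"
    \<comment> \<open>turning proportions: values in [0,1], stationary with mean pbar, independent of queues and services\<close>
    and p_range: "\<And>t \<omega> i' i. \<omega> \<in> space M \<Longrightarrow> (i', i) \<in> L \<Longrightarrow> 0 \<le> p t \<omega> i' i \<and> p t \<omega> i' i \<le> 1"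
    and p_meas: "\<And>t i' i. (i', i) \<in> L \<Longrightarrow> (\<lambda>\<omega>. p t \<omega> i' i) \<in> borel_measurable M"
    and p_stat: "\<And>t. distr M (PiM L (\<lambda>_. borel)) (\<lambda>\<omega>. \<lambda>l\<in>L. p t \<omega> (fst l) (snd l))
                   = distr M (PiM L (\<lambda>_. borel)) (\<lambda>\<omega>. \<lambda>l\<in>L. p 0 \<omega> (fst l) (snd l))"
    and p_mean: "\<And>t i' i. (i', i) \<in> L \<Longrightarrow> (\<integral>\<omega>. p t \<omega> i' i \<partial>M) = pbar i' i"
    and p_indep: "\<And>t. prob_space.indep_set M
        (sets (vimage_algebra (space M) (\<lambda>\<omega>. \<lambda>l\<in>L. p t \<omega> (fst l) (snd l)) (PiM L (\<lambda>_. borel))))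
        (sets (vimage_algebra (space M) (\<lambda>\<omega>. (restrict (Q t \<omega>) I, restrict (S t \<omega>) I))
                 (PiM I (\<lambda>_. borel) \<Otimes>\<^sub>M PiM I (\<lambda>_. borel))))"
    \<comment> \<open>arrivals: nonnegative integers; A(t), t >= 1, i.i.d. with expectation a\<close>
    and A_nat: "\<And>t \<omega> i. \<omega> \<in> space M \<Longrightarrow> i \<in> I \<Longrightarrow> A t \<omega> i \<in> \<nat>"
    and A_meas: "\<And>t i. i \<in> I \<Longrightarrow> (\<lambda>\<omega>. A t \<omega> i) \<in> borel_measurable M"
    and A_indep: "prob_space.indep_vars M (\<lambda>_. PiM I (\<lambda>_. borel)) (\<lambda>t \<omega>. restrict (A t \<omega>) I) {1..}"
    and A_ident: "\<And>t. t \<ge> 1 \<Longrightarrow> distr M (PiM I (\<lambda>_. borel)) (\<lambda>\<omega>. restrict (A t \<omega>) I)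
                                 = distr M (PiM I (\<lambda>_. borel)) (\<lambda>\<omega>. restrict (A 1 \<omega>) I)"
    and A_mean: "\<And>i. i \<in> I \<Longrightarrow> integrable M (\<lambda>\<omega>. A 1 \<omega> i) \<and> (\<integral>\<omega>. A 1 \<omega> i \<partial>M) = a i"
    \<comment> \<open>queue dynamics\<close>
    and dyn: "\<And>t \<omega> i. \<omega> \<in> space M \<Longrightarrow> i \<in> I \<Longrightarrow>
        Q (Suc t) \<omega> i = Q t \<omega> i - min (S t \<omega> i) (Q t \<omega> i) + A t \<omega> i
          + (\<Sum>i'\<in>{i'. (i', i) \<in> L}. min (S t \<omega> i') (Q t \<omega> i') * p t \<omega> i' i)"
    and a_notin: "a \<notin> closed_stab_region J In Ph L pbar T L0"
  shows "((\<lambda>\<tau>::nat. \<integral>\<^sup>+\<omega>. ennreal ((1 / real \<tau>) * (\<Sum>t\<in>{1..\<tau>}. \<Sum>i\<in>I. Q t \<omega> i)) \<partial>M)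
           \<longlongrightarrow> \<infinity>) sequentially"
proof -
  interpret road_network M J In jun Ph L T L0 Smax Q S A p pbar P a I
    by (intro road_network.intro road_network_axioms.intro prob) (fact | simp add: I_def)+
  show ?thesis
    using unstable[OF a_notin] unfolding avg_queue_def[abs_def] .
qed

end
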